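(* Let $q$ be a prime power and $k\ge3$, $h\ge2$ integers, and $1\le u_0<u_1\le\dots\le u_h$ integers. Let $U_0,U_1,\dots,U_h$ be subspaces of $\mathbf F_q^k$ of dimensions $u_0,u_1,\dots,u_h$ with $U_i\cap U_j=U_0$ for all distinct $i,j\in\{1,\dots,h\}$, and assume $q^k-q^{k-1}>q^{u_0}-1+\sum_{i=1}^h(q^{u_i}-q^{u_0})$. Let $U$ be the set of nonzero vectors of $\mathbf F_q^k$ not in $U_1\cup\dots\cup U_h$, let $\widetilde G$ be a matrix whose columns consist of exactly one representative of each class $\{\lambda\mathbf v:\lambda\in\mathbf F_q^*\}$, $\mathbf v\in U$, and let $\mathbf C$ be the linear code with generator matrix $\widetilde G$. 1) If $u_1=\dots=u_{s_1}<u_{s_1+1}=\dots=u_{s_1+s_2}<\dots<u_{s_1+\dots+s_{t-1}+1}=\dots=u_{s_1+\dots+s_t}$ with $1\le s_i<q$ for $i=1,\dots,t$ and $h=s_1+\dots+s_t$, then the Griesmer defect of $\mathbf C$ is at most $(h-1)\frac{q^{u_0}-1}{q-1}$. 2) If $u_1=\dots=u_h=u$, then the Griesmer defect of $\mathbf C$ is at most $(h-1)\frac{q^{u_0}-1}{q-1}+\sum_{i=1}^{k-u}\lfloor h/q^i\rfloor$.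
   Context: For a linear $[n,k,d]_q$ code, $g_q(k,d)=\sum_{i=0}^{k-1}\lceil d/q^i\rceil$ and the Griesmer defect is $n-g_q(k,d)$. *)

theory Defs
  imports "HOL-Analysis.Analysis" "HOL-Library.Function_Algebras"
begin

text \<open>Words of length n over a field are modelled as functions nat => 'a
  (only the coordinates 0..n-1 matter; generated codes vanish outside).
  The pointwise vector space structure on functions:\<close>

definition fscale :: "'a::field \<Rightarrow> (nat \<Rightarrow> 'a) \<Rightarrow> (nat \<Rightarrow> 'a)" where
  "fscale c f = (\<lambda>i. c * f i)"

interpretation fvs: vector_space "fscale :: 'a::field \<Rightarrow> (nat \<Rightarrow> 'a) \<Rightarrow> (nat \<Rightarrow> 'a)"
  by unfold_locales (auto simp: fscale_def algebra_simps fun_eq_iff)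

definition dotp :: "'a::field ^ 'n \<Rightarrow> 'a ^ 'n \<Rightarrow> 'a" where
  "dotp x y = (\<Sum>j\<in>UNIV. x $ j * y $ j)"

text \<open>The linear code generated by the matrix whose columns are the list cs:
  all words m * G (m ranging over F^k), i.e. the row space of G.\<close>
definition gen_code :: "('a::field ^ 'n) list \<Rightarrow> (nat \<Rightarrow> 'a) set" where
  "gen_code cs = {(\<lambda>i. if i < length cs then dotp m (cs ! i) else 0) | m. True}"

definition hweight :: "nat \<Rightarrow> (nat \<Rightarrow> 'a::zero) \<Rightarrow> nat" where
  "hweight n c = card {i. i < n \<and> c i \<noteq> 0}"

definition code_dim :: "(nat \<Rightarrow> 'a::field) set \<Rightarrow> nat" where
  "code_dim C = fvs.dim C"

definition min_dist :: "nat \<Rightarrow> (nat \<Rightarrow> 'a::field) set \<Rightarrow> nat" where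
  "min_dist n C = Min {hweight n c | c. c \<in> C \<and> c \<noteq> 0}"

definition griesmer :: "nat \<Rightarrow> nat \<Rightarrow> nat \<Rightarrow> int" where
  "griesmer q k d = (\<Sum>i<k. \<lceil>real d / real q ^ i\<rceil>)"

definition griesmer_defect :: "('a::{finite,field} ^ 'n) list \<Rightarrow> int" where
  "griesmer_defect cs =
     int (length cs) - griesmer CARD('a) (code_dim (gen_code cs)) (min_dist (length cs) (gen_code cs))"

end

theory Submission
  imports Defs
begin

(* Write q = |F|, k = dim F^k, theta_u = (q^u - 1)/(q - 1) and E for the union of U_1, ..., U_h.
  Since E is the disjoint union of U_0 and the sets U_i - U_0, and every vector outside E is
  a nonzero multiple of exactly one column, (q - 1) n = q^k - |E|, that is
  n = theta_k + (h - 1) theta_{u_0} - sum_i theta_{u_i}.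
  For m <> 0 the vectors outside E not orthogonal to m are (q - 1) wt(m G) many, while the
  non-orthogonal vectors of U_i number at most (q - 1) q^(u_i - 1).  Hence
  wt(m G) >= q^(k-1) - T with T = sum_i q^(u_i - 1), and the size hypothesis on E makes every
  weight positive, so the code has dimension k.  From d >= q^(k-1) - T we get
  ceil(d/q^i) >= q^(k-1-i) - floor(T/q^i), so the defect is at most
  (h - 1) theta_{u_0} - sum_i theta_{u_i} + sum_{i<k} floor(T/q^i).
  If fewer than q of the u_i are equal, T is written in base q without carries and the last sum
  equals sum_i theta_{u_i}; if all u_i equal u, T = h q^(u-1) and it equals
  h theta_u + sum_{i=1}^{k-u} floor(h/q^i). *)

definition theta :: "nat \<Rightarrow> nat \<Rightarrow> nat" where
  "theta q u = (\<Sum>i<u. q ^ i)"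

lemma theta_int: "(int q - 1) * int (theta q u) = int q ^ u - 1"
proof (induction u)
  case (Suc u)
  then show ?case by (simp add: theta_def algebra_simps)
qed (simp add: theta_def)

lemma theta_real: "q \<ge> 2 \<Longrightarrow> real (theta q u) = (real q ^ u - 1) / (real q - 1)"
  using arg_cong[OF theta_int[of q u], of real_of_int] by (simp add: field_simps)

lemma theta_rev: "theta q u = (\<Sum>i<u. q ^ (u - 1 - i))"
  unfolding theta_def using sum.nat_diff_reindex[of "\<lambda>i. q ^ i" u] by simp

lemma le_ceiling_divide_plus_div:
  fixes a p d t :: nat
  assumes "0 < p" "a * p \<le> d + t"
  shows "int a \<le> \<lceil>real d / real p\<rceil> + int (t div p)"
proof -
  have "t = t div p * p + t mod p" by simp
  then have "a * p < d + t div p * p + p"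
    using assms mod_less_divisor[OF assms(1), of t] by linarith
  then have "real a * real p < real d + real (t div p) * real p + real p"
    by (simp flip: of_nat_mult of_nat_add)
  then have "real a - real (t div p) - 1 < real d / real p"
    using assms(1) by (simp add: field_simps)
  then show ?thesis by linarith
qed

lemma theta_le_griesmer:
  fixes q k d t :: nat
  assumes "0 < q" "q ^ (k - 1) \<le> d + t"
  shows "int (theta q k) \<le> griesmer q k d + int (\<Sum>i<k. t div q ^ i)"
proof -
  have "int (q ^ (k - 1 - i)) \<le> \<lceil>real d / real q ^ i\<rceil> + int (t div q ^ i)" if "i < k" for i
  proof -
    have "q ^ (k - 1 - i) * q ^ i = q ^ (k - 1)"
      using that by (simp flip: power_add)
    then show ?thesis
      using le_ceiling_divide_plus_div[of "q ^ i" "q ^ (k - 1 - i)" d t] assms by simp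
  qed
  then have "(\<Sum>i<k. int (q ^ (k - 1 - i))) \<le> (\<Sum>i<k. \<lceil>real d / real q ^ i\<rceil> + int (t div q ^ i))"
    by (intro sum_mono) simp
  then show ?thesis
    unfolding griesmer_def theta_rev[of q k] by (simp add: sum.distrib)
qed

lemma sum_pow_small_exponents_less:
  fixes J :: "nat set" and u :: "nat \<Rightarrow> nat"
  assumes "finite J" "\<And>j. j \<in> J \<Longrightarrow> 1 \<le> u j" "\<And>v. card {j\<in>J. u j = v} < q"
  shows "(\<Sum>j | j \<in> J \<and> u j \<le> i. q ^ (u j - 1)) < q ^ i"
proof (induction i)
  case 0
  have "{j\<in>J. u j \<le> 0} = {}" using assms(2) by fastforce
  then show ?case by (simp only:) simp
next
  case (Suc i)
  have layers: "{j\<in>J. u j \<le> Suc i} = {j\<in>J. u j \<le> i} \<union> {j\<in>J. u j = Suc i}"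
    by auto
  have "(\<Sum>j | j \<in> J \<and> u j \<le> Suc i. q ^ (u j - 1))
        = (\<Sum>j | j \<in> J \<and> u j \<le> i. q ^ (u j - 1)) + card {j\<in>J. u j = Suc i} * q ^ i"
    unfolding layers using assms(1) by (subst sum.union_disjoint) auto
  also have "\<dots> < q ^ i + (q - 1) * q ^ i"
    using Suc.IH assms(3)[of "Suc i"] by (intro add_less_le_mono mult_right_mono) auto
  also have "\<dots> = q ^ Suc i"
    using assms(3)[of 0] by (cases q) auto
  finally show ?case .
qed

(* If no exponent occurs q or more times, the sum is written in base q without carries,
  so dividing by q^i simply drops the digits below position i. *)
lemma sum_pow_div_pow:
  fixes J :: "nat set" and u :: "nat \<Rightarrow> nat"
  assumes "finite J" "\<And>j. j \<in> J \<Longrightarrow> 1 \<le> u j" "\<And>v. card {j\<in>J. u j = v} < q"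
  shows "(\<Sum>j\<in>J. q ^ (u j - 1)) div q ^ i = (\<Sum>j | j \<in> J \<and> i < u j. q ^ (u j - 1 - i))"
proof -
  have "(\<Sum>j\<in>J. q ^ (u j - 1)) = (\<Sum>j\<in>{j\<in>J. u j \<le> i} \<union> {j\<in>J. i < u j}. q ^ (u j - 1))"
    by (intro sum.cong) auto
  also have "\<dots> = (\<Sum>j | j \<in> J \<and> u j \<le> i. q ^ (u j - 1)) + (\<Sum>j | j \<in> J \<and> i < u j. q ^ (u j - 1))"
    using assms(1) by (intro sum.union_disjoint) auto
  also have "(\<Sum>j | j \<in> J \<and> i < u j. q ^ (u j - 1)) = q ^ i * (\<Sum>j | j \<in> J \<and> i < u j. q ^ (u j - 1 - i))"
    unfolding sum_distrib_left by (intro sum.cong) (auto simp flip: power_add)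
  finally show ?thesis
    using sum_pow_small_exponents_less[OF assms, of i] assms(3)[of 0] by simp
qed

lemma sum_div_pow_eq_sum_theta:
  fixes J :: "nat set" and u :: "nat \<Rightarrow> nat"
  assumes "finite J" "\<And>j. j \<in> J \<Longrightarrow> 1 \<le> u j \<and> u j \<le> k" "\<And>v. card {j\<in>J. u j = v} < q"
  shows "(\<Sum>i<k. (\<Sum>j\<in>J. q ^ (u j - 1)) div q ^ i) = (\<Sum>j\<in>J. theta q (u j))"
proof -
  have "(\<Sum>j\<in>J. q ^ (u j - 1)) div q ^ i = (\<Sum>j | j \<in> J \<and> i < u j. q ^ (u j - 1 - i))" for i
    by (rule sum_pow_div_pow) (use assms in auto)
  then have "(\<Sum>i<k. (\<Sum>j\<in>J. q ^ (u j - 1)) div q ^ i)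
      = (\<Sum>i<k. \<Sum>j\<in>J. if i < u j then q ^ (u j - 1 - i) else 0)"
    by (simp only: sum.inter_filter[OF assms(1)])
  also have "\<dots> = (\<Sum>j\<in>J. \<Sum>i<k. if i < u j then q ^ (u j - 1 - i) else 0)"
    by (rule sum.swap)
  also have "\<dots> = (\<Sum>j\<in>J. \<Sum>i<u j. q ^ (u j - 1 - i))"
  proof (rule sum.cong)
    fix j assume "j \<in> J"
    then have "{i\<in>{..<k}. i < u j} = {..<u j}" using assms(2)[of j] by auto
    then show "(\<Sum>i<k. if i < u j then q ^ (u j - 1 - i) else 0) = (\<Sum>i<u j. q ^ (u j - 1 - i))"
      by (simp only: sum.inter_filter[symmetric, OF finite_lessThan])
  qed simp
  finally show ?thesis by (simp add: theta_rev)
qed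

lemma sum_div_pow_mult_pow:
  fixes h w k q :: nat
  assumes "0 < q" "1 \<le> w" "w \<le> k"
  shows "(\<Sum>i<k. h * q ^ (w - 1) div q ^ i) = h * theta q w + (\<Sum>m=1..k-w. h div q ^ m)"
proof -
  have "{..<k} = {..<w} \<union> {w..<k}" using assms by auto
  then have "(\<Sum>i<k. h * q ^ (w - 1) div q ^ i)
      = (\<Sum>i<w. h * q ^ (w - 1) div q ^ i) + (\<Sum>i=w..<k. h * q ^ (w - 1) div q ^ i)"
    by (simp add: sum.union_disjoint ivl_disj_int_one(2))
  also have "(\<Sum>i<w. h * q ^ (w - 1) div q ^ i) = h * theta q w"
  proof -
    have "h * q ^ (w - 1) div q ^ i = h * q ^ (w - 1 - i)" if "i < w" for i
    proof -
      have "h * q ^ (w - 1) = h * q ^ (w - 1 - i) * q ^ i"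
        using that by (simp flip: power_add)
      then show ?thesis using assms(1) by (simp only:) simp
    qed
    then show ?thesis by (simp add: theta_rev sum_distrib_left)
  qed
  also have "(\<Sum>i=w..<k. h * q ^ (w - 1) div q ^ i) = (\<Sum>m=1..k-w. h div q ^ m)"
  proof -
    have "(\<Sum>i=w..<k. h * q ^ (w - 1) div q ^ i) = (\<Sum>m=1..<k-w+1. h * q ^ (w - 1) div q ^ (m + (w - 1)))"
      using sum.shift_bounds_nat_ivl[of "\<lambda>i. h * q ^ (w - 1) div q ^ i" 1 "w - 1" "k - w + 1"] assms
      by simp
    also have "\<dots> = (\<Sum>m=1..k-w. h div q ^ m)"
    proof (rule sum.cong)
      fix m
      have "h * q ^ (w - 1) div q ^ (m + (w - 1)) = h * q ^ (w - 1) div q ^ (w - 1) div q ^ m"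
        by (simp only: add.commute[of m] power_add div_mult2_eq)
      then show "h * q ^ (w - 1) div q ^ (m + (w - 1)) = h div q ^ m"
        using assms(1) by simp
    qed (simp add: atLeastLessThanSuc_atLeastAtMost)
    finally show ?thesis .
  qed
  finally show ?thesis .
qed

lemma two_le_card_field: "2 \<le> CARD('a::{finite,field})"
proof -
  have "card {0::'a, 1} \<le> CARD('a)" by (rule card_mono) simp_all
  then show ?thesis by simp
qed

lemma dotp_add_right: "dotp m (x + y) = dotp m x + dotp m y"
  unfolding dotp_def by (simp add: sum.distrib distrib_left)

lemma dotp_diff_right: "dotp m (x - y) = dotp m x - dotp m y"
  unfolding dotp_def by (simp add: sum_subtractf right_diff_distrib)

lemma dotp_scale_right: "dotp m (c *s x) = c * dotp m x"
  unfolding dotp_def by (simp add: sum_distrib_left mult.left_commute)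

lemma dotp_add_left: "dotp (m + m') x = dotp m x + dotp m' x"
  unfolding dotp_def by (simp add: sum.distrib distrib_right)

lemma dotp_scale_left: "dotp (c *s m) x = c * dotp m x"
  unfolding dotp_def by (simp add: sum_distrib_left mult.assoc)

lemma dotp_axis_right: "dotp m (axis j 1) = m $ j"
  unfolding dotp_def axis_def by (simp add: if_distrib cong: if_cong)

lemma card_subspace:
  fixes S :: "('a::{finite,field} ^ 'n) set"
  assumes "vec.subspace S"
  shows "card S = CARD('a) ^ vec.dim S"
proof -
  obtain B where B: "B \<subseteq> S" "vec.independent B" "S \<subseteq> vec.span B" "card B = vec.dim S"
    using vec.basis_exists by blast
  have "finite B" using B(2) vec.independent_explicit by blast
  define coords where "coords f = (\<Sum>v\<in>B. f v *s v)" for f :: "'a ^ 'n \<Rightarrow> 'a"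
  have "bij_betw coords (B \<rightarrow>\<^sub>E UNIV) S"
  proof (rule bij_betw_imageI)
    show "inj_on coords (B \<rightarrow>\<^sub>E UNIV)"
    proof (rule inj_onI)
      fix f g assume f: "f \<in> B \<rightarrow>\<^sub>E UNIV" and g: "g \<in> B \<rightarrow>\<^sub>E UNIV" and "coords f = coords g"
      then have "(\<Sum>v\<in>B. (f v - g v) *s v) = 0"
        unfolding coords_def by (simp add: vector_sub_rdistrib sum_subtractf)
      then have "\<forall>v\<in>B. f v - g v = 0"
        using B(2) unfolding vec.independent_explicit by (auto dest: spec[of _ "\<lambda>v. f v - g v"])
      then show "f = g" using f g by (auto intro: PiE_ext)
    qed
    have "vec.span B = S" by (rule vec.span_subspace[OF B(1,3) assms])
    then show "coords ` (B \<rightarrow>\<^sub>E UNIV) = S"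
      unfolding coords_def vec.span_finite[OF \<open>finite B\<close>]
      by (auto intro!: image_eqI[where x = "restrict _ B"] sum.cong)
  qed
  then have "card S = card (B \<rightarrow>\<^sub>E (UNIV :: 'a set))" by (simp add: bij_betw_same_card)
  then show ?thesis using \<open>finite B\<close> B(4) by (simp add: card_PiE)
qed

lemma card_nonorthogonal_subspace:
  fixes S :: "('a::{finite,field} ^ 'n) set"
  assumes S: "vec.subspace S" and "w \<in> S" "dotp m w \<noteq> 0"
  shows "card {x\<in>S. dotp m x \<noteq> 0} = (CARD('a) - 1) * CARD('a) ^ (vec.dim S - 1)"
proof -
  define e where "e = inverse (dotp m w) *s w"
  have e: "e \<in> S" "dotp m e = 1"
    using assms vec.subspace_scale[OF S] by (simp_all add: e_def dotp_scale_right)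
  define S0 where "S0 = {x\<in>S. dotp m x = 0}"
  have "bij_betw (\<lambda>(x, t). x + t *s e) (S0 \<times> T) {y\<in>S. dotp m y \<in> T}" for T
    by (rule bij_betw_byWitness[where f' = "\<lambda>y. (y - dotp m y *s e, dotp m y)"])
      (use e in \<open>auto simp: S0_def dotp_add_right dotp_diff_right dotp_scale_right
         intro!: vec.subspace_add[OF S] vec.subspace_diff[OF S] vec.subspace_scale[OF S]\<close>)
  note same_card = bij_betw_same_card[OF this]
  from same_card[of UNIV] same_card[of "UNIV - {0}"]
  have "card {x\<in>S. dotp m x \<noteq> 0} * CARD('a) = card S * (CARD('a) - 1)"
    by (simp add: card_cartesian_product card_Diff_subset) (metis mult.assoc mult.commute)
  moreover have "w \<noteq> 0" using assms(3) unfolding dotp_def by auto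
  then have "vec.dim S \<noteq> 0" using assms(2) by auto
  then have "card S = CARD('a) ^ (vec.dim S - 1) * CARD('a)"
    using card_subspace[OF S] by (metis Suc_diff_1 not_gr0 power_Suc2)
  ultimately show ?thesis
    using two_le_card_field[where 'a = 'a] by simp
qed

lemma card_by_scalar_representatives:
  fixes R S :: "('a::{finite,field} ^ 'n) set"
  assumes R: "R \<subseteq> S" and S0: "0 \<notin> S"
    and scale_closed: "\<And>v l. v \<in> S \<Longrightarrow> l \<noteq> 0 \<Longrightarrow> l *s v \<in> S"
    and rep: "\<And>v. v \<in> S \<Longrightarrow> \<exists>!c. c \<in> R \<and> (\<exists>l. l \<noteq> 0 \<and> c = l *s v)"
    and P: "\<And>v l. l \<noteq> 0 \<Longrightarrow> P (l *s v) = P v"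
  shows "card {v\<in>S. P v} = card {c\<in>R. P c} * (CARD('a) - 1)"
proof -
  let ?F = "\<lambda>(c, l). l *s c"
  have same_rep: "c = c' \<and> l = l'"
    if "c \<in> R" "c' \<in> R" "l \<noteq> 0" "l' \<noteq> 0" "l *s c = l' *s c'" for c c' l l'
  proof -
    have "c = (inverse l * l') *s c'"
      using that(3,5) by (metis vec.scale_scale vector_smult_lid field_class.field_inverse)
    moreover have "c' = 1 *s c'" by simp
    moreover have "c' \<in> S" using that(2) R by blast
    ultimately have "c = c'"
      using rep[of c'] that by (metis mult_eq_0_iff inverse_nonzero_iff_nonzero one_neq_zero)
    moreover have "c' \<noteq> 0" using \<open>c' \<in> S\<close> S0 by blast
    ultimately show ?thesis using that(5) vec.scale_right_imp_eq by blast
  qed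
  have "inj_on ?F ({c\<in>R. P c} \<times> (UNIV - {0}))"
    by (rule inj_onI) (use same_rep in auto)
  moreover have "?F ` ({c\<in>R. P c} \<times> (UNIV - {0})) = {v\<in>S. P v}"
  proof
    show "?F ` ({c\<in>R. P c} \<times> (UNIV - {0})) \<subseteq> {v\<in>S. P v}"
      using R scale_closed P by auto
    show "{v\<in>S. P v} \<subseteq> ?F ` ({c\<in>R. P c} \<times> (UNIV - {0}))"
    proof
      fix v assume v: "v \<in> {v\<in>S. P v}"
      then obtain c l where c: "c \<in> R" "l \<noteq> 0" "c = l *s v"
        using rep by blast
      then have "v = inverse l *s c" by (simp add: vec.scale_scale)
      moreover have "P c" using c v P by simp
      ultimately show "v \<in> ?F ` ({c\<in>R. P c} \<times> (UNIV - {0}))"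
        using c by (intro image_eqI[where x = "(c, inverse l)"]) auto
    qed
  qed
  ultimately have "card {v\<in>S. P v} = card ({c\<in>R. P c} \<times> (UNIV - {0 :: 'a}))"
    using card_image by fastforce
  also have "\<dots> = card {c\<in>R. P c} * (CARD('a) - 1)"
    by (simp add: card_cartesian_product card_Diff_subset)
  finally show ?thesis .
qed

definition encode :: "('a::field ^ 'n) list \<Rightarrow> 'a ^ 'n \<Rightarrow> nat \<Rightarrow> 'a" where
  "encode cs m i = (if i < length cs then dotp m (cs ! i) else 0)"

interpretation vec_fun: finite_dimensional_vector_space_pair_1
    "(*s) :: 'a::field \<Rightarrow> 'a ^ 'n \<Rightarrow> 'a ^ 'n" cart_basis "fscale :: 'a \<Rightarrow> (nat \<Rightarrow> 'a) \<Rightarrow> _"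
  by (intro finite_dimensional_vector_space_pair_1.intro vec.finite_dimensional_vector_space_axioms
      fvs.vector_space_axioms)

lemma gen_code_eq_range_encode: "gen_code cs = range (encode cs)"
  unfolding gen_code_def encode_def by (auto simp: fun_eq_iff)

lemma linear_encode: "Vector_Spaces.linear (*s) fscale (encode cs)"
  unfolding Vector_Spaces.linear_iff
  by (auto simp: vec.vector_space_axioms fvs.vector_space_axioms encode_def fscale_def fun_eq_iff
      dotp_add_left dotp_scale_left)

lemma hweight_encode:
  assumes "distinct cs"
  shows "hweight (length cs) (encode cs m) = card {c\<in>set cs. dotp m c \<noteq> 0}"
proof -
  have "{c\<in>set cs. dotp m c \<noteq> 0} = nth cs ` {i. i < length cs \<and> encode cs m i \<noteq> 0}"
    by (auto simp: encode_def in_set_conv_nth)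
  moreover have "inj_on (nth cs) {i. i < length cs \<and> encode cs m i \<noteq> 0}"
    using assms by (intro inj_on_nth) auto
  ultimately show ?thesis
    unfolding hweight_def by (simp add: card_image)
qed

lemma inj_encode:
  assumes "\<And>m. m \<noteq> 0 \<Longrightarrow> 0 < hweight (length cs) (encode cs m)"
  shows "inj (encode cs)"
proof -
  have "encode cs m \<noteq> 0" if "m \<noteq> 0" for m
    using assms[OF that] by (auto simp: hweight_def)
  then show ?thesis
    using vec_fun.linear_inj_iff_eq_0[OF linear_encode] by blast
qed

lemma code_dim_gen_code:
  fixes cs :: "('a::{finite,field} ^ 'n) list"
  assumes "inj (encode cs)"
  shows "code_dim (gen_code cs) = CARD('n)"
proof -
  have "fvs.dim (range (encode cs)) = vec.dim (UNIV :: ('a ^ 'n) set)"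
    using assms by (intro vec_fun.dim_image_eq[OF linear_encode]) (auto intro: inj_on_subset)
  then show ?thesis
    by (simp add: code_dim_def gen_code_eq_range_encode card_cart_basis)
qed

lemma min_dist_gen_code_attained:
  fixes cs :: "('a::{finite,field} ^ 'n) list"
  assumes "inj (encode cs)"
  obtains m where "m \<noteq> 0" "min_dist (length cs) (gen_code cs) = hweight (length cs) (encode cs m)"
proof -
  have "encode cs m \<noteq> 0 \<longleftrightarrow> m \<noteq> 0" for m
    using assms vec_fun.linear_0[OF linear_encode] by (metis injD)
  then have weights: "{hweight (length cs) c | c. c \<in> gen_code cs \<and> c \<noteq> 0}
      = (\<lambda>m. hweight (length cs) (encode cs m)) ` (UNIV - {0})"
    by (auto simp: gen_code_eq_range_encode)
  have "axis undefined 1 \<noteq> (0 :: 'a ^ 'n)" by (simp add: axis_eq_0_iff)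
  then have "UNIV - {0 :: 'a ^ 'n} \<noteq> {}" by blast
  then have "min_dist (length cs) (gen_code cs) \<in> (\<lambda>m. hweight (length cs) (encode cs m)) ` (UNIV - {0})"
    unfolding min_dist_def weights by (intro Min_in) auto
  then show ?thesis using that by blast
qed

locale subspace_sunflower =
  fixes U :: "nat \<Rightarrow> ('a::{finite,field} ^ 'n::finite) set" and u :: "nat \<Rightarrow> nat" and h :: nat
  assumes two_le_h: "2 \<le> h" and one_le_u0: "1 \<le> u 0"
    and subspace: "\<And>i. i \<le> h \<Longrightarrow> vec.subspace (U i)"
    and dim: "\<And>i. i \<le> h \<Longrightarrow> vec.dim (U i) = u i"
    and petals_meet: "\<And>i j. i \<in> {1..h} \<Longrightarrow> j \<in> {1..h} \<Longrightarrow> i \<noteq> j \<Longrightarrow> U i \<inter> U j = U 0"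
begin

lemma card_U: "i \<le> h \<Longrightarrow> card (U i) = CARD('a) ^ u i"
  using card_subspace[OF subspace] dim by simp

lemma scale_mem_U_iff:
  assumes "i \<le> h" "l \<noteq> 0"
  shows "l *s v \<in> U i \<longleftrightarrow> v \<in> U i"
  using vec.subspace_scale[OF subspace[OF assms(1)], of v l]
    vec.subspace_scale[OF subspace[OF assms(1)], of "l *s v" "inverse l"] assms(2)
  by (auto simp: vec.scale_scale)

lemma kernel_subset: "i \<in> {1..h} \<Longrightarrow> U 0 \<subseteq> U i"
  using petals_meet[of i 1] petals_meet[of i 2] two_le_h by (cases "i = 1") auto

lemma u_bounds: "i \<in> {1..h} \<Longrightarrow> 1 \<le> u i \<and> u i \<le> CARD('n)"
  using vec.dim_subset[OF kernel_subset] vec.dim_subset[of "U i" UNIV] dim one_le_u0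
  by (fastforce simp: card_cart_basis)

lemma card_Union:
  "int (card (\<Union>i\<in>{1..h}. U i)) = int CARD('a) ^ u 0 + (\<Sum>i\<in>{1..h}. int CARD('a) ^ u i - int CARD('a) ^ u 0)"
proof -
  have petals: "card (\<Union>i\<in>{1..h}. U i - U 0) = (\<Sum>i\<in>{1..h}. card (U i - U 0))"
  proof (rule card_UN_disjoint)
    show "\<forall>i\<in>{1..h}. \<forall>j\<in>{1..h}. i \<noteq> j \<longrightarrow> (U i - U 0) \<inter> (U j - U 0) = {}"
    proof (intro ballI impI)
      fix i j assume "i \<in> {1..h}" "j \<in> {1..h}" "i \<noteq> j"
      then have "U i \<inter> U j = U 0" by (rule petals_meet)
      then show "(U i - U 0) \<inter> (U j - U 0) = {}" by blast
    qed
  qed simp_all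
  have "U 0 \<subseteq> (\<Union>i\<in>{1..h}. U i)"
    using kernel_subset[of 1] two_le_h by force
  then have "card (\<Union>i\<in>{1..h}. U i) = card (U 0 \<union> (\<Union>i\<in>{1..h}. U i - U 0))"
    by (intro arg_cong[where f = card]) blast
  also have "\<dots> = card (U 0) + (\<Sum>i\<in>{1..h}. card (U i - U 0))"
    unfolding petals[symmetric] by (rule card_Un_disjoint) auto
  also have "\<dots> = card (U 0) + (\<Sum>i\<in>{1..h}. card (U i) - card (U 0))"
    by (simp add: card_Diff_subset kernel_subset)
  finally show ?thesis
    using card_mono[OF _ kernel_subset] by (simp add: card_U of_nat_diff)
qed

lemma card_nonorthogonal_Union_le:
  "card {v \<in> (\<Union>i\<in>{1..h}. U i). dotp m v \<noteq> 0} \<le> (\<Sum>i\<in>{1..h}. (CARD('a) - 1) * CARD('a) ^ (u i - 1))"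
proof -
  have "{v \<in> (\<Union>i\<in>{1..h}. U i). dotp m v \<noteq> 0} = (\<Union>i\<in>{1..h}. {v\<in>U i. dotp m v \<noteq> 0})"
    by blast
  then have "card {v \<in> (\<Union>i\<in>{1..h}. U i). dotp m v \<noteq> 0}
      \<le> (\<Sum>i\<in>{1..h}. card {v\<in>U i. dotp m v \<noteq> 0})"
    by (simp add: card_UN_le)
  also have "\<dots> \<le> (\<Sum>i\<in>{1..h}. (CARD('a) - 1) * CARD('a) ^ (u i - 1))"
  proof (rule sum_mono)
    fix i assume i: "i \<in> {1..h}"
    show "card {v\<in>U i. dotp m v \<noteq> 0} \<le> (CARD('a) - 1) * CARD('a) ^ (u i - 1)"
    proof (cases "\<exists>w\<in>U i. dotp m w \<noteq> 0")
      case True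
      then show ?thesis using card_nonorthogonal_subspace[OF subspace] dim i by fastforce
    next
      case False
      then have "{v\<in>U i. dotp m v \<noteq> 0} = {}" by blast
      then show ?thesis by (simp only: card.empty)
    qed
  qed
  finally show ?thesis .
qed

end

locale sunflower_complement_code = subspace_sunflower U u h
  for U :: "nat \<Rightarrow> ('a::{finite,field} ^ 'n::finite) set" and u h +
  fixes cs :: "('a ^ 'n) list"
  assumes few_points: "int CARD('a) ^ CARD('n) - int CARD('a) ^ (CARD('n) - 1)
      > int CARD('a) ^ u 0 - 1 + (\<Sum>i\<in>{1..h}. int CARD('a) ^ u i - int CARD('a) ^ u 0)"
    and distinct_cs: "distinct cs"
    and cs_outside: "set cs \<subseteq> {v. v \<noteq> 0 \<and> (\<forall>i\<in>{1..h}. v \<notin> U i)}"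
    and cs_representatives: "\<And>v. v \<in> {v. v \<noteq> 0 \<and> (\<forall>i\<in>{1..h}. v \<notin> U i)} \<Longrightarrow>
      \<exists>!c. c \<in> set cs \<and> (\<exists>l. l \<noteq> 0 \<and> c = l *s v)"
begin

definition outside :: "('a ^ 'n) set" where
  "outside = {v. v \<noteq> 0 \<and> (\<forall>i\<in>{1..h}. v \<notin> U i)}"

lemma outside_eq: "outside = UNIV - (\<Union>i\<in>{1..h}. U i)"
  using vec.subspace_0[OF subspace, of 1] two_le_h by (force simp: outside_def)

lemma card_outside:
  assumes "\<And>v l. l \<noteq> 0 \<Longrightarrow> P (l *s v) = P v"
  shows "card {v\<in>outside. P v} = card {c\<in>set cs. P c} * (CARD('a) - 1)"
proof (rule card_by_scalar_representatives[OF _ _ _ _ assms])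
  show "l *s v \<in> outside" if "v \<in> outside" "l \<noteq> 0" for v l
    using that scale_mem_U_iff by (auto simp: outside_def)
qed (use cs_outside cs_representatives in \<open>auto simp: outside_def\<close>)

lemma length_cs:
  "length cs + (\<Sum>i\<in>{1..h}. theta CARD('a) (u i)) = theta CARD('a) CARD('n) + (h - 1) * theta CARD('a) (u 0)"
proof -
  define q where "q = CARD('a)"
  have "length cs * (q - 1) = card outside"
    using card_outside[of "\<lambda>_. True"] distinct_card[OF distinct_cs] by (simp add: q_def)
  also have "\<dots> = q ^ CARD('n) - card (\<Union>i\<in>{1..h}. U i)"
    unfolding outside_eq by (simp add: card_Diff_subset q_def)
  finally have "length cs * (q - 1) + card (\<Union>i\<in>{1..h}. U i) = q ^ CARD('n)"
    using card_mono[of UNIV "\<Union>i\<in>{1..h}. U i"] by (simp add: q_def)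
  then have "int (length cs * (q - 1)) + int (card (\<Union>i\<in>{1..h}. U i)) = int q ^ CARD('n)"
    by (metis of_nat_add of_nat_power)
  then have "int (length cs) * (int q - 1) + int (card (\<Union>i\<in>{1..h}. U i)) = int q ^ CARD('n)"
    using two_le_card_field by (simp add: q_def of_nat_diff)
  then have "(int q - 1) * int (length cs) = (int q ^ CARD('n) - 1) - (int q ^ u 0 - 1)
      - (\<Sum>i\<in>{1..h}. (int q ^ u i - 1) - (int q ^ u 0 - 1))"
    using card_Union by (simp add: q_def algebra_simps sum_subtractf)
  also have "\<dots> = (int q - 1) * (int (theta q CARD('n)) - int (theta q (u 0))
      - (\<Sum>i\<in>{1..h}. int (theta q (u i)) - int (theta q (u 0))))"
    by (simp only: theta_int[symmetric] sum_distrib_left right_diff_distrib)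
  finally have "int (length cs) = int (theta q CARD('n)) - int (theta q (u 0))
      - (\<Sum>i\<in>{1..h}. int (theta q (u i)) - int (theta q (u 0)))"
    using two_le_card_field[where 'a = 'a] by (simp add: q_def)
  then have "int (length cs + (\<Sum>i\<in>{1..h}. theta q (u i))) = int (theta q CARD('n) + (h - 1) * theta q (u 0))"
    using two_le_h by (simp add: sum_subtractf of_nat_diff left_diff_distrib)
  then show ?thesis
    by (simp only: of_nat_eq_iff q_def)
qed

lemma weight_split:
  assumes "m \<noteq> 0"
  shows "(CARD('a) - 1) * hweight (length cs) (encode cs m) + card {v \<in> (\<Union>i\<in>{1..h}. U i). dotp m v \<noteq> 0}
    = (CARD('a) - 1) * CARD('a) ^ (CARD('n) - 1)"
proof -
  obtain j where "m $ j \<noteq> 0" using assms by (metis vec_eq_iff zero_index)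
  then have "card {v\<in>UNIV. dotp m v \<noteq> 0} = (CARD('a) - 1) * CARD('a) ^ (CARD('n) - 1)"
    using card_nonorthogonal_subspace[OF vec.subspace_UNIV, of "axis j 1" m]
    by (simp add: dotp_axis_right card_cart_basis)
  moreover have "{v\<in>UNIV. dotp m v \<noteq> 0}
      = {v\<in>outside. dotp m v \<noteq> 0} \<union> {v \<in> (\<Union>i\<in>{1..h}. U i). dotp m v \<noteq> 0}"
    by (auto simp: outside_eq)
  then have "card {v\<in>UNIV. dotp m v \<noteq> 0}
      = card {v\<in>outside. dotp m v \<noteq> 0} + card {v \<in> (\<Union>i\<in>{1..h}. U i). dotp m v \<noteq> 0}"
    by (simp only:) (rule card_Un_disjoint, auto simp: outside_eq)
  moreover have "card {v\<in>outside. dotp m v \<noteq> 0} = hweight (length cs) (encode cs m) * (CARD('a) - 1)"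
    unfolding hweight_encode[OF distinct_cs] by (rule card_outside) (simp add: dotp_scale_right)
  ultimately show ?thesis
    by (simp only: mult.commute)
qed

lemma weight_pos:
  assumes "m \<noteq> 0"
  shows "0 < hweight (length cs) (encode cs m)"
proof -
  have "0 \<in> (\<Union>i\<in>{1..h}. U i)"
    using vec.subspace_0[OF subspace, of 1] two_le_h by force
  moreover have "0 \<notin> {v \<in> (\<Union>i\<in>{1..h}. U i). dotp m v \<noteq> 0}"
    by (simp add: dotp_def)
  ultimately have "card {v \<in> (\<Union>i\<in>{1..h}. U i). dotp m v \<noteq> 0} < card (\<Union>i\<in>{1..h}. U i)"
    by (intro psubset_card_mono) (simp, blast)
  moreover have "card (\<Union>i\<in>{1..h}. U i) \<le> (CARD('a) - 1) * CARD('a) ^ (CARD('n) - 1)"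
  proof -
    have "int (card (\<Union>i\<in>{1..h}. U i)) \<le> (int CARD('a) - 1) * int CARD('a) ^ (CARD('n) - 1)"
      using few_points card_Union by (simp add: power_eq_if algebra_simps split: if_splits)
    moreover have "int ((CARD('a) - 1) * CARD('a) ^ (CARD('n) - 1)) = (int CARD('a) - 1) * int CARD('a) ^ (CARD('n) - 1)"
      using two_le_card_field[where 'a = 'a] by (simp add: of_nat_diff)
    ultimately show ?thesis
      by linarith
  qed
  ultimately have "0 < (CARD('a) - 1) * hweight (length cs) (encode cs m)"
    using weight_split[OF assms] by linarith
  then show ?thesis by simp
qed

lemma weight_lower_bound:
  assumes "m \<noteq> 0"
  shows "CARD('a) ^ (CARD('n) - 1) \<le> hweight (length cs) (encode cs m) + (\<Sum>i\<in>{1..h}. CARD('a) ^ (u i - 1))"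
proof -
  have "(CARD('a) - 1) * CARD('a) ^ (CARD('n) - 1)
      \<le> (CARD('a) - 1) * hweight (length cs) (encode cs m) + (\<Sum>i\<in>{1..h}. (CARD('a) - 1) * CARD('a) ^ (u i - 1))"
    using weight_split[OF assms] card_nonorthogonal_Union_le[of m] by linarith
  then have "(CARD('a) - 1) * CARD('a) ^ (CARD('n) - 1)
      \<le> (CARD('a) - 1) * (hweight (length cs) (encode cs m) + (\<Sum>i\<in>{1..h}. CARD('a) ^ (u i - 1)))"
    by (simp add: sum_distrib_left distrib_left)
  then show ?thesis
    using two_le_card_field[where 'a = 'a] by simp
qed

lemma griesmer_defect_le:
  "griesmer_defect cs + int (\<Sum>i\<in>{1..h}. theta CARD('a) (u i))
    \<le> int ((h - 1) * theta CARD('a) (u 0) + (\<Sum>i<CARD('n). (\<Sum>j\<in>{1..h}. CARD('a) ^ (u j - 1)) div CARD('a) ^ i))"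
proof -
  have inj: "inj (encode cs)"
    by (rule inj_encode) (rule weight_pos)
  obtain m where m: "m \<noteq> 0" "min_dist (length cs) (gen_code cs) = hweight (length cs) (encode cs m)"
    using min_dist_gen_code_attained[OF inj] .
  have "int (theta CARD('a) CARD('n)) \<le> griesmer CARD('a) CARD('n) (min_dist (length cs) (gen_code cs))
      + int (\<Sum>i<CARD('n). (\<Sum>j\<in>{1..h}. CARD('a) ^ (u j - 1)) div CARD('a) ^ i)"
    using weight_lower_bound[OF m(1)] unfolding m(2) by (intro theta_le_griesmer) simp_all
  then show ?thesis
    using length_cs unfolding griesmer_defect_def code_dim_gen_code[OF inj] by linarith
qed

lemma griesmer_defect_le_few_equal_dims:
  assumes few_equal: "\<And>i. i \<in> {1..h} \<Longrightarrow> card {j\<in>{1..h}. u j = u i} < CARD('a)"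
  shows "griesmer_defect cs \<le> int ((h - 1) * theta CARD('a) (u 0))"
proof -
  have "card {j\<in>{1..h}. u j = v} < CARD('a)" for v
  proof (cases "{j\<in>{1..h}. u j = v} = {}")
    case False
    then obtain i where "i \<in> {1..h}" "u i = v" by blast
    then show ?thesis using few_equal by blast
  next
    case True
    then show ?thesis using two_le_card_field[where 'a = 'a] by (simp only: card.empty)
  qed
  then have "(\<Sum>i<CARD('n). (\<Sum>j\<in>{1..h}. CARD('a) ^ (u j - 1)) div CARD('a) ^ i)
      = (\<Sum>j\<in>{1..h}. theta CARD('a) (u j))"
    by (intro sum_div_pow_eq_sum_theta) (use u_bounds in auto)
  then show ?thesis
    using griesmer_defect_le by simp
qed

lemma griesmer_defect_le_equal_dims:
  assumes u_w: "\<And>i. i \<in> {1..h} \<Longrightarrow> u i = w"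
  shows "griesmer_defect cs \<le> int ((h - 1) * theta CARD('a) (u 0) + (\<Sum>m=1..CARD('n)-w. h div CARD('a) ^ m))"
proof -
  have "1 \<le> w" "w \<le> CARD('n)"
    using u_bounds[of 1] u_w[of 1] two_le_h by auto
  then have "(\<Sum>i<CARD('n). (\<Sum>j\<in>{1..h}. CARD('a) ^ (u j - 1)) div CARD('a) ^ i)
      = h * theta CARD('a) w + (\<Sum>m=1..CARD('n)-w. h div CARD('a) ^ m)"
    using sum_div_pow_mult_pow[of "CARD('a)" w "CARD('n)" h] two_le_card_field[where 'a = 'a] u_w
    by simp
  then show ?thesis
    using griesmer_defect_le u_w by simp
qed

end

theorem lemma3p2:
  fixes U :: "nat \<Rightarrow> ('a::{finite,field} ^ 'n::finite) set"
    and u :: "nat \<Rightarrow> nat" and h :: nat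
    and cs :: "('a ^ 'n) list"
  assumes k3: "CARD('n) \<ge> 3"
    and h2: "h \<ge> 2"
    and u0: "1 \<le> u 0" and u01: "u 0 < u 1"
    and umono: "\<And>i. 1 \<le> i \<Longrightarrow> i < h \<Longrightarrow> u i \<le> u (Suc i)"
    and subsp: "\<And>i. i \<le> h \<Longrightarrow> vec.subspace (U i)"
    and dims: "\<And>i. i \<le> h \<Longrightarrow> vec.dim (U i) = u i"
    and inter: "\<And>i j. i \<in> {1..h} \<Longrightarrow> j \<in> {1..h} \<Longrightarrow> i \<noteq> j \<Longrightarrow> U i \<inter> U j = U 0"
    and ineq: "int CARD('a) ^ CARD('n) - int CARD('a) ^ (CARD('n) - 1)
               > int CARD('a) ^ u 0 - 1 + (\<Sum>i\<in>{1..h}. int CARD('a) ^ u i - int CARD('a) ^ u 0)"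
    and cs_dist: "distinct cs"
    and cs_sub: "set cs \<subseteq> {v. v \<noteq> 0 \<and> (\<forall>i\<in>{1..h}. v \<notin> U i)}"
    and cs_rep: "\<And>v. v \<in> {v. v \<noteq> 0 \<and> (\<forall>i\<in>{1..h}. v \<notin> U i)} \<Longrightarrow>
                   \<exists>!c. c \<in> set cs \<and> (\<exists>l. l \<noteq> 0 \<and> c = l *s v)"
  shows "((\<forall>i\<in>{1..h}. card {j\<in>{1..h}. u j = u i} < CARD('a)) \<longrightarrow>
            real_of_int (griesmer_defect cs)
              \<le> real (h - 1) * ((real CARD('a) ^ u 0 - 1) / (real CARD('a) - 1)))
       \<and> (\<forall>w. (\<forall>i\<in>{1..h}. u i = w) \<longrightarrow>
            real_of_int (griesmer_defect cs)
              \<le> real (h - 1) * ((real CARD('a) ^ u 0 - 1) / (real CARD('a) - 1))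
                 + (\<Sum>i\<in>{1..CARD('n) - w}. real_of_int \<lfloor>real h / real CARD('a) ^ i\<rfloor>))"
proof -
  interpret sunflower_complement_code U u h cs
    by unfold_locales (use h2 u0 subsp dims inter ineq cs_dist cs_sub cs_rep in auto)
  have theta_u0: "(real CARD('a) ^ u 0 - 1) / (real CARD('a) - 1) = real (theta CARD('a) (u 0))"
    using theta_real[OF two_le_card_field[where 'a = 'a]] by simp
  have floor_eq: "real_of_int \<lfloor>real h / real CARD('a) ^ m\<rfloor> = real (h div CARD('a) ^ m)" for m
    using floor_divide_of_nat_eq[where 'a = real, of h "CARD('a) ^ m"] by simp
  show ?thesis
  proof (intro conjI allI impI)
    assume "\<forall>i\<in>{1..h}. card {j\<in>{1..h}. u j = u i} < CARD('a)"
    then have "griesmer_defect cs \<le> int ((h - 1) * theta CARD('a) (u 0))"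
      by (intro griesmer_defect_le_few_equal_dims) blast
    then show "real_of_int (griesmer_defect cs) \<le> real (h - 1) * ((real CARD('a) ^ u 0 - 1) / (real CARD('a) - 1))"
      unfolding theta_u0 by (metis of_int_le_iff of_int_of_nat_eq of_nat_mult)
  next
    fix w assume "\<forall>i\<in>{1..h}. u i = w"
    then have "griesmer_defect cs \<le> int ((h - 1) * theta CARD('a) (u 0) + (\<Sum>m=1..CARD('n)-w. h div CARD('a) ^ m))"
      by (intro griesmer_defect_le_equal_dims) blast
    then show "real_of_int (griesmer_defect cs) \<le> real (h - 1) * ((real CARD('a) ^ u 0 - 1) / (real CARD('a) - 1))
        + (\<Sum>i\<in>{1..CARD('n) - w}. real_of_int \<lfloor>real h / real CARD('a) ^ i\<rfloor>)"
      unfolding theta_u0 floor_eq by (metis of_int_le_iff of_int_of_nat_eq of_nat_add of_nat_mult of_nat_sum)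
  qed
qed

end
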